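(* For any ultradiscrete ballean $(X,\mathcal E_X)$ we have $\operatorname{add}(\mathcal B_X)<\operatorname{cof}(\mathcal B_X)$.
   Context: A ballean is a pair $(X,\mathcal E_X)$ where $X$ is a set and $\mathcal E_X$ is a family of subsets of $X\times X$ (entourages) such that: each $E\in\mathcal E_X$ contains the diagonal $\Delta_X$; for any $E,F\in\mathcal E_X$ there is $D\in\mathcal E_X$ with $E\circ F^{-1}\subset D$; and $\bigcup\mathcal E_X=X\times X$. For $E\in\mathcal E_X$, $x\in X$, $A\subset X$: $E[x]=\{y:(x,y)\in E\}$, $E[A]=\bigcup_{a\in A}E[a]$. $B\subset X$ is bounded if $B\subset E[x]$ for some $E\in\mathcal E_X$, $x\in X$; $\mathcal B_X$ is the family of bounded sets, ordered by inclusion. Sets $A,B$ are asymptotically disjoint if $E[A]\cap E[B]\in\mathcal B_X$ for all $E\in\mathcal E_X$. $X$ is ultranormal if it contains no two unbounded asymptotically disjoint sets. $X$ is discrete if $X$ is unbounded and for every $E\in\mathcal E_X$ there is a bounded $B_E\subset X$ with $E[x]=\{x\}$ for all $x\in X\setminus B_E$; ultradiscrete means discrete and ultranormal. For a poset $P$, $\operatorname{add}(P)$ is the least cardinality of a subset without upper bound and $\operatorname{cof}(P)$ the least cardinality of a cofinal subset. *)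

theory Defs
  imports Main
begin

unbundle cardinal_syntax

definition ballean :: "'a set \<Rightarrow> ('a \<times> 'a) set set \<Rightarrow> bool" where
  "ballean X \<E> \<longleftrightarrow>
     (\<forall>E\<in>\<E>. E \<subseteq> X \<times> X \<and> Id_on X \<subseteq> E) \<and>
     (\<forall>E\<in>\<E>. \<forall>F\<in>\<E>. \<exists>D\<in>\<E>. E O F\<inverse> \<subseteq> D) \<and>
     \<Union>\<E> = X \<times> X"

definition bounded_in :: "'a set \<Rightarrow> ('a \<times> 'a) set set \<Rightarrow> 'a set \<Rightarrow> bool" where
  "bounded_in X \<E> B \<longleftrightarrow> (\<exists>E\<in>\<E>. \<exists>x\<in>X. B \<subseteq> E `` {x})"

definition bounded_sets :: "'a set \<Rightarrow> ('a \<times> 'a) set set \<Rightarrow> 'a set set" where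
  "bounded_sets X \<E> = {B. B \<subseteq> X \<and> bounded_in X \<E> B}"

definition asymp_disjoint :: "'a set \<Rightarrow> ('a \<times> 'a) set set \<Rightarrow> 'a set \<Rightarrow> 'a set \<Rightarrow> bool" where
  "asymp_disjoint X \<E> A B \<longleftrightarrow> (\<forall>E\<in>\<E>. bounded_in X \<E> (E `` A \<inter> E `` B))"

definition ultranormal :: "'a set \<Rightarrow> ('a \<times> 'a) set set \<Rightarrow> bool" where
  "ultranormal X \<E> \<longleftrightarrow>
     \<not> (\<exists>A B. A \<subseteq> X \<and> B \<subseteq> X \<and> \<not> bounded_in X \<E> A \<and> \<not> bounded_in X \<E> B
              \<and> asymp_disjoint X \<E> A B)"

definition discrete_ballean :: "'a set \<Rightarrow> ('a \<times> 'a) set set \<Rightarrow> bool" where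
  "discrete_ballean X \<E> \<longleftrightarrow> \<not> bounded_in X \<E> X \<and>
     (\<forall>E\<in>\<E>. \<exists>B. B \<subseteq> X \<and> bounded_in X \<E> B \<and> (\<forall>x\<in>X - B. E `` {x} = {x}))"

definition ultradiscrete :: "'a set \<Rightarrow> ('a \<times> 'a) set set \<Rightarrow> bool" where
  "ultradiscrete X \<E> \<longleftrightarrow> discrete_ballean X \<E> \<and> ultranormal X \<E>"

definition no_upper_bound :: "'b set set \<Rightarrow> 'b set set \<Rightarrow> bool" where
  "no_upper_bound P A \<longleftrightarrow> A \<subseteq> P \<and> \<not> (\<exists>U\<in>P. \<forall>a\<in>A. a \<subseteq> U)"

definition cofinal_in :: "'b set set \<Rightarrow> 'b set set \<Rightarrow> bool" where
  "cofinal_in P C \<longleftrightarrow> C \<subseteq> P \<and> (\<forall>p\<in>P. \<exists>c\<in>C. p \<subseteq> c)"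

text \<open>add(P) < cof(P): some subfamily without upper bound is of strictly smaller
  cardinality than every cofinal subfamily (the minima defining add and cof exist since
  cardinals are well-ordered).\<close>
definition add_lt_cof :: "'b set set \<Rightarrow> bool" where
  "add_lt_cof P \<longleftrightarrow> (\<exists>A. no_upper_bound P A \<and> (\<forall>C. cofinal_in P C \<longrightarrow> ordLess2 (card_of A) (card_of C)))"

end

theory Submission
  imports Defs
begin

text \<open>Let C be a cofinal family of bounded sets of least cardinality, well-ordered by its
  cardinal order, and suppose every subfamily smaller than C has an upper bound. Then every initial
  segment of C has bounded union, so sending each point to the first member of C containing it
  turns bounded subsets of X into subsets of C bounded from above, and conversely. As one of two
  disjoint sets in an ultradiscrete ballean is bounded, the image of X would be an unbounded subset
  of a well-order admitting no splitting into two unbounded parts. No such set exists: either its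
  non-successor elements are unbounded, or above some point it is an \<omega>-chain of successive
  elements whose even and odd terms are both unbounded.\<close>

lemma ballean_entourageD:
  assumes "ballean X \<E>" and "E \<in> \<E>"
  shows "E \<subseteq> X \<times> X" and "Id_on X \<subseteq> E"
  using assms unfolding ballean_def by auto

lemma ballean_relcomp_converse:
  assumes "ballean X \<E>" and "E \<in> \<E>" and "F \<in> \<E>"
  shows "\<exists>D\<in>\<E>. E O F\<inverse> \<subseteq> D"
  using assms unfolding ballean_def by auto

lemma ballean_coverD:
  assumes "ballean X \<E>" and "x \<in> X" and "y \<in> X"
  shows "\<exists>G\<in>\<E>. (x, y) \<in> G"
proof -
  have "(x, y) \<in> \<Union>\<E>"
    using assms unfolding ballean_def by auto
  then show ?thesis by blast
qed

lemma ballean_relcomp: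
  assumes B: "ballean X \<E>" and E: "E \<in> \<E>" and F: "F \<in> \<E>"
  shows "\<exists>D\<in>\<E>. E O F \<subseteq> D"
proof -
  obtain D where D: "D \<in> \<E>" "F O F\<inverse> \<subseteq> D"
    using ballean_relcomp_converse[OF B F F] by blast
  have "F\<inverse> \<subseteq> F O F\<inverse>"
    using ballean_entourageD[OF B F] by auto
  then have "E O F \<subseteq> E O D\<inverse>"
    using D(2) by blast
  moreover obtain D' where "D' \<in> \<E>" "E O D\<inverse> \<subseteq> D'"
    using ballean_relcomp_converse[OF B E D(1)] by blast
  ultimately show ?thesis by blast
qed

lemma ballean_Un:
  assumes B: "ballean X \<E>" and E: "E \<in> \<E>" and F: "F \<in> \<E>"
  shows "\<exists>D\<in>\<E>. E \<union> F \<subseteq> D"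
proof -
  obtain D where D: "D \<in> \<E>" "E O E\<inverse> \<subseteq> D"
    using ballean_relcomp_converse[OF B E E] by blast
  have "Id_on X \<union> E \<subseteq> E O E\<inverse>"
    using ballean_entourageD[OF B E] by auto
  then have DE: "E \<subseteq> D" and DI: "(a, a) \<in> D" if "a \<in> X" for a
    using D(2) that by auto
  have FI: "(b, b) \<in> F" if "b \<in> X" for b
    using ballean_entourageD(2)[OF B F] that by auto
  have "E \<subseteq> D O F"
    using DE FI ballean_entourageD(1)[OF B E] by blast
  moreover have "F \<subseteq> D O F"
    using DI ballean_entourageD(1)[OF B F] by blast
  ultimately have "E \<union> F \<subseteq> D O F"
    by blast
  then show ?thesis
    using ballean_relcomp[OF B D(1) F] by blast
qed

lemma bounded_in_subset: "bounded_in X \<E> B \<Longrightarrow> A \<subseteq> B \<Longrightarrow> bounded_in X \<E> A"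
  unfolding bounded_in_def by blast

lemma bounded_in_singleton:
  assumes "ballean X \<E>" and "x \<in> X"
  shows "bounded_in X \<E> {x}"
  using ballean_coverD[OF assms assms(2)] assms(2) unfolding bounded_in_def by blast

lemma bounded_in_Image:
  assumes B: "ballean X \<E>" and E: "E \<in> \<E>" and A: "bounded_in X \<E> A"
  shows "bounded_in X \<E> (E `` A)"
proof -
  obtain F x where F: "F \<in> \<E>" "x \<in> X" "A \<subseteq> F `` {x}"
    using A unfolding bounded_in_def by blast
  obtain D where "D \<in> \<E>" "F O E \<subseteq> D"
    using ballean_relcomp[OF B F(1) E] by blast
  with F show ?thesis
    unfolding bounded_in_def by blast
qed

lemma bounded_in_Un:
  assumes B: "ballean X \<E>" and A: "bounded_in X \<E> A" and A': "bounded_in X \<E> A'"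
  shows "bounded_in X \<E> (A \<union> A')"
proof -
  obtain E x where E: "E \<in> \<E>" "x \<in> X" "A \<subseteq> E `` {x}"
    using A unfolding bounded_in_def by blast
  obtain F y where F: "F \<in> \<E>" "y \<in> X" "A' \<subseteq> F `` {y}"
    using A' unfolding bounded_in_def by blast
  obtain G where G: "G \<in> \<E>" "(x, y) \<in> G"
    using ballean_coverD[OF B E(2) F(2)] by blast
  obtain H where H: "H \<in> \<E>" "G O F \<subseteq> H"
    using ballean_relcomp[OF B G(1) F(1)] by blast
  obtain D where D: "D \<in> \<E>" "E \<union> H \<subseteq> D"
    using ballean_Un[OF B E(1) H(1)] by blast
  have "A \<union> A' \<subseteq> D `` {x}"
    using E(3) F(3) G(2) H(2) D(2) by blast
  with D(1) E(2) show ?thesis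
    unfolding bounded_in_def by blast
qed

lemma ultradiscrete_disjoint_bounded:
  assumes B: "ballean X \<E>" and U: "ultradiscrete X \<E>"
    and "A \<subseteq> X" "A' \<subseteq> X" and disjoint: "A \<inter> A' = {}"
  shows "bounded_in X \<E> A \<or> bounded_in X \<E> A'"
proof -
  have "asymp_disjoint X \<E> A A'"
    unfolding asymp_disjoint_def
  proof
    fix E assume E: "E \<in> \<E>"
    obtain BE where BE: "bounded_in X \<E> BE" "\<forall>x\<in>X - BE. E `` {x} = {x}"
      using U E unfolding ultradiscrete_def discrete_ballean_def by blast
    have "E `` A \<inter> E `` A' \<subseteq> E `` BE"
    proof
      fix y assume "y \<in> E `` A \<inter> E `` A'"
      then obtain a a' where a: "a \<in> A" "(a, y) \<in> E" and a': "a' \<in> A'" "(a', y) \<in> E"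
        by blast
      have "a \<in> BE \<or> a' \<in> BE"
      proof (rule ccontr)
        assume "\<not> (a \<in> BE \<or> a' \<in> BE)"
        then have "E `` {a} = {a}" "E `` {a'} = {a'}"
          using BE(2) a(1) a'(1) \<open>A \<subseteq> X\<close> \<open>A' \<subseteq> X\<close> by auto
        then have "a = a'"
          using a(2) a'(2) by auto
        with a(1) a'(1) disjoint show False by blast
      qed
      with a a' show "y \<in> E `` BE" by blast
    qed
    then show "bounded_in X \<E> (E `` A \<inter> E `` A')"
      using bounded_in_subset bounded_in_Image[OF B E BE(1)] by blast
  qed
  with assms(3,4) U show ?thesis
    unfolding ultradiscrete_def ultranormal_def by blast
qed

context wo_rel
begin

definition succ_in :: "'a set \<Rightarrow> 'a \<Rightarrow> 'a" where
  "succ_in J a = minim (J \<inter> aboveS a)"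

lemma succ_in:
  assumes J: "J \<subseteq> Field r" and unbounded: "Above J = {}" and a: "a \<in> Field r"
  shows succ_in_in: "succ_in J a \<in> J"
    and succ_in_greater: "(a, succ_in J a) \<in> r" "succ_in J a \<noteq> a"
    and succ_in_least: "\<And>m. m \<in> J \<Longrightarrow> (a, m) \<in> r \<Longrightarrow> m \<noteq> a \<Longrightarrow> (succ_in J a, m) \<in> r"
proof -
  obtain m where m: "m \<in> J" "(m, a) \<notin> r"
    using unbounded a unfolding Above_def by blast
  then have "m \<in> J \<inter> aboveS a"
    using TOTALS REFL a J unfolding aboveS_def refl_on_def by blast
  then have "J \<inter> aboveS a \<subseteq> Field r" "J \<inter> aboveS a \<noteq> {}"
    using J by blast+
  then have "succ_in J a \<in> J \<inter> aboveS a"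
    unfolding succ_in_def by (rule minim_in)
  then show "succ_in J a \<in> J" "(a, succ_in J a) \<in> r" "succ_in J a \<noteq> a"
    unfolding aboveS_def by blast+
  show "(succ_in J a, m') \<in> r" if "m' \<in> J" "(a, m') \<in> r" "m' \<noteq> a" for m'
    unfolding succ_in_def using that J by (intro minim_least) (auto simp: aboveS_def)
qed

lemma succ_in_mono:
  assumes J: "J \<subseteq> Field r" and unbounded: "Above J = {}" and ab: "(a, b) \<in> r"
  shows "(succ_in J a, succ_in J b) \<in> r"
proof -
  have a: "a \<in> Field r" and b: "b \<in> Field r"
    using ab unfolding Field_def by blast+
  have "(b, succ_in J b) \<in> r" "succ_in J b \<noteq> b"
    using succ_in_greater[OF J unbounded b] by blast+
  with ab have "(a, succ_in J b) \<in> r" "succ_in J b \<noteq> a"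
    using TRANS ANTISYM unfolding trans_def antisym_def by blast+
  then show ?thesis
    using succ_in_least[OF J unbounded a] succ_in_in[OF J unbounded b] by blast
qed

lemma Above_succ_in_image:
  assumes J: "J \<subseteq> Field r" and unbounded: "Above J = {}"
  shows "Above (succ_in J ` J) = {}"
proof -
  have "Above (succ_in J ` J) \<subseteq> Above J"
    using succ_in_greater(1)[OF J unbounded] J TRANS unfolding Above_def trans_def by blast
  with unbounded show ?thesis by blast
qed

lemma succ_in_iterates_cofinal:
  assumes J: "J \<subseteq> Field r" and unbounded: "Above J = {}" and c0: "c0 \<in> Field r"
    and successors: "\<And>j. j \<in> J \<Longrightarrow> (j, c0) \<notin> r \<Longrightarrow> j \<in> succ_in J ` J"
  shows "Above (range (\<lambda>n. (succ_in J ^^ Suc n) c0)) = {}"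
proof (rule ccontr)
  assume bounded: "Above (range (\<lambda>n. (succ_in J ^^ Suc n) c0)) \<noteq> {}"
  define s where "s n = (succ_in J ^^ Suc n) c0" for n
  have s_Suc: "s (Suc n) = succ_in J (s n)" for n
    unfolding s_def by simp
  have sJ: "s n \<in> J" for n
    by (induction n) (use succ_in_in[OF J unbounded] c0 J in \<open>auto simp: s_def\<close>)
  obtain c where c: "c \<in> Field r" "\<And>n. (s n, c) \<in> r"
    using bounded unfolding Above_def s_def by blast
  \<comment> \<open>The least element m0 of J above the whole chain is not below c0, hence of the form
    succ_in J i; but i lies below some s n, which forces m0 below s (Suc n).\<close>
  define M where "M = {m \<in> J. \<forall>n. (s n, m) \<in> r \<and> s n \<noteq> m}"
  obtain m where m: "m \<in> J" "(m, c) \<notin> r"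
    using unbounded c(1) unfolding Above_def by blast
  then have "(c, m) \<in> r"
    using TOTALS J c(1) by blast
  then have "m \<in> M"
    using m c(2) TRANS unfolding M_def trans_def by blast
  then have M_nonempty: "M \<noteq> {}" and M_Field: "M \<subseteq> Field r"
    using J unfolding M_def by blast+
  define m0 where "m0 = minim M"
  have m0M: "m0 \<in> M"
    unfolding m0_def using M_Field M_nonempty by (rule minim_in)
  have "(c0, s 0) \<in> r" "s 0 \<noteq> c0"
    using succ_in_greater[OF J unbounded c0] by (simp_all add: s_def)
  then have "(m0, c0) \<notin> r"
    using m0M ANTISYM TRANS unfolding M_def antisym_def trans_def by blast
  then obtain i where i: "i \<in> J" "m0 = succ_in J i"
    using successors m0M unfolding M_def by blast
  have iField: "i \<in> Field r"
    using i(1) J by blast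
  have "i \<notin> M"
    using minim_least[OF M_Field] succ_in_greater[OF J unbounded iField] ANTISYM
    unfolding m0_def[symmetric] i(2)[symmetric] antisym_def by blast
  then obtain n where "(i, s n) \<in> r"
    using i(1) TOTALS REFL J sJ unfolding M_def refl_on_def by blast
  then have "(m0, s (Suc n)) \<in> r"
    unfolding i(2) s_Suc by (rule succ_in_mono[OF J unbounded])
  then show False
    using m0M ANTISYM unfolding M_def antisym_def by blast
qed

lemma strictly_increasing_chain_split:
  assumes increasing: "\<And>n. (s n, s (Suc n)) \<in> r" and strict: "\<And>n. s n \<noteq> s (Suc n)"
    and sJ: "range s \<subseteq> J" and cofinal: "Above (range s) = {}"
  shows "\<exists>S\<subseteq>J. Above S = {} \<and> Above (J - S) = {}"
proof -
  have s_le: "(s m, s n) \<in> r" if "m \<le> n" for m n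
    using that
  proof (induction n rule: dec_induct)
    case base
    show ?case using increasing REFL unfolding Field_def refl_on_def by blast
  next
    case (step n)
    then show ?case using increasing TRANS unfolding trans_def by blast
  qed
  have s_inj: "inj s"
  proof (rule linorder_injI)
    fix m n :: nat assume "m < n"
    then have above_Suc: "(s (Suc m), s n) \<in> r"
      by (intro s_le) simp
    show "s m \<noteq> s n"
    proof
      assume "s m = s n"
      with above_Suc have "(s (Suc m), s m) \<in> r" by simp
      with increasing[of m] have "s m = s (Suc m)"
        by (rule antisymD[OF ANTISYM])
      with strict show False by blast
    qed
  qed
  have subsequence_cofinal: "Above (range (s \<circ> g)) = {}" if g_ge: "\<And>n. n \<le> g n" for g
  proof -
    have "(s n, c) \<in> r" if c: "c \<in> Above (range (s \<circ> g))" for n c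
    proof -
      have "(s (g n), c) \<in> r"
        using c unfolding Above_def by auto
      then show ?thesis
        by (rule transD[OF TRANS s_le[OF g_ge]])
    qed
    with cofinal show ?thesis
      unfolding Above_def by blast
  qed
  define S where "S = range (s \<circ> (\<lambda>n. 2 * n))"
  have "s (2 * n + 1) \<notin> S" for n
  proof
    assume "s (2 * n + 1) \<in> S"
    then obtain m where "s (2 * n + 1) = s (2 * m)"
      unfolding S_def by auto
    then have "2 * n + 1 = 2 * m"
      by (rule injD[OF s_inj])
    then show False by presburger
  qed
  then have "range (s \<circ> (\<lambda>n. 2 * n + 1)) \<subseteq> J - S"
    using sJ by auto
  then have "Above (J - S) \<subseteq> Above (range (s \<circ> (\<lambda>n. 2 * n + 1)))"
    unfolding Above_def by blast
  moreover have "S \<subseteq> J"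
    using sJ unfolding S_def by auto
  ultimately show ?thesis
    using subsequence_cofinal[of "\<lambda>n. 2 * n"] subsequence_cofinal[of "\<lambda>n. 2 * n + 1"]
    unfolding S_def by auto
qed

lemma unbounded_split:
  assumes J: "J \<subseteq> Field r" and unbounded: "Above J = {}"
  shows "\<exists>S\<subseteq>J. Above S = {} \<and> Above (J - S) = {}"
  \<comment> \<open>Split off the successors if the remaining elements are unbounded; otherwise the
    successors beyond a bound c0 of the rest form a cofinal \<omega>-chain.\<close>
proof (cases "Above (J - succ_in J ` J) = {}")
  case True
  moreover have "succ_in J ` J \<subseteq> J"
    using succ_in_in[OF J unbounded] J by blast
  ultimately show ?thesis
    using Above_succ_in_image[OF J unbounded] by blast
next
  case False
  then obtain c0 where c0: "c0 \<in> Field r" "\<And>j. j \<in> J - succ_in J ` J \<Longrightarrow> (j, c0) \<in> r"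
    unfolding Above_def by blast
  define s where "s n = (succ_in J ^^ Suc n) c0" for n
  have sJ: "s n \<in> J" for n
    by (induction n) (use succ_in_in[OF J unbounded] c0 J in \<open>auto simp: s_def\<close>)
  have s_increasing: "(s n, s (Suc n)) \<in> r" and s_strict: "s n \<noteq> s (Suc n)" for n
  proof -
    have "s n \<in> Field r" "s (Suc n) = succ_in J (s n)"
      using sJ J by (auto simp: s_def)
    then show "(s n, s (Suc n)) \<in> r" "s n \<noteq> s (Suc n)"
      using succ_in_greater[OF J unbounded] by metis+
  qed
  have "range s \<subseteq> J"
    using sJ by blast
  moreover have "Above (range s) = {}"
    unfolding s_def using c0 by (intro succ_in_iterates_cofinal[OF J unbounded]) blast+
  ultimately show ?thesis
    by (rule strictly_increasing_chain_split[of s, OF s_increasing s_strict])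
qed

end

lemma ex_cofinal_in_card_minimal:
  "\<exists>C. cofinal_in P C \<and> (\<forall>C'. cofinal_in P C' \<longrightarrow> |C| \<le>o |C'| )"
proof -
  define R where "R = {|C| | C. cofinal_in P C}"
  have "cofinal_in P P"
    unfolding cofinal_in_def by blast
  then have "R \<noteq> {}"
    unfolding R_def by blast
  moreover have "\<forall>r\<in>R. Well_order r"
    unfolding R_def using card_of_Well_order by blast
  ultimately obtain r where "r \<in> R" "\<forall>r'\<in>R. r \<le>o r'"
    using exists_minim_Well_order by blast
  then show ?thesis
    unfolding R_def by blast
qed

definition first_cover :: "'a set set \<Rightarrow> 'a \<Rightarrow> 'a set" where
  "first_cover C x = wo_rel.minim |C| {c \<in> C. x \<in> c}"

lemma first_cover:
  assumes "x \<in> \<Union>C"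
  shows first_cover_in: "first_cover C x \<in> C"
    and mem_first_cover: "x \<in> first_cover C x"
    and first_cover_least: "\<And>c. c \<in> C \<Longrightarrow> x \<in> c \<Longrightarrow> (first_cover C x, c) \<in> |C|"
proof -
  interpret wo_rel "|C|"
    by (simp add: wo_rel_def card_of_Well_order)
  have covers: "{c \<in> C. x \<in> c} \<subseteq> Field |C|" "{c \<in> C. x \<in> c} \<noteq> {}"
    using assms by (auto simp: Field_card_of)
  then show "first_cover C x \<in> C" "x \<in> first_cover C x"
    using minim_in unfolding first_cover_def by blast+
  show "(first_cover C x, c) \<in> |C|" if "c \<in> C" "x \<in> c" for c
    using minim_least[OF covers(1)] that unfolding first_cover_def by blast
qed

lemma cofinal_in_bounded_sets_covers:
  assumes "ballean X \<E>" and "cofinal_in (bounded_sets X \<E>) C"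
  shows "X \<subseteq> \<Union>C"
proof
  fix x assume "x \<in> X"
  then have "{x} \<in> bounded_sets X \<E>"
    using bounded_in_singleton[OF assms(1)] unfolding bounded_sets_def by blast
  then show "x \<in> \<Union>C"
    using assms(2) unfolding cofinal_in_def by blast
qed

lemma bounded_in_Union_under:
  assumes B: "ballean X \<E>" and C: "C \<subseteq> bounded_sets X \<E>"
    and no_small_unbounded: "\<nexists>A. no_upper_bound (bounded_sets X \<E>) A \<and> |A| <o |C|"
    and c: "c \<in> C"
  shows "bounded_in X \<E> (\<Union>(under |C| c))"
proof -
  have "|underS |C| c| <o |C|"
    using card_of_underS[OF card_of_Card_order] c by (simp add: Field_card_of)
  moreover have "underS |C| c \<subseteq> bounded_sets X \<E>"
    using Order_Relation.underS_Field[of "|C|" c] C by (simp add: Field_card_of)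
  ultimately obtain U where U: "U \<in> bounded_sets X \<E>" "\<forall>a\<in>underS |C| c. a \<subseteq> U"
    using no_small_unbounded unfolding no_upper_bound_def by blast
  have "\<Union>(under |C| c) \<subseteq> U \<union> c"
    using U(2) unfolding under_def underS_def by blast
  moreover have "bounded_in X \<E> (U \<union> c)"
    using bounded_in_Un[OF B] U(1) C c unfolding bounded_sets_def by blast
  ultimately show ?thesis
    by (rule bounded_in_subset[rotated])
qed

lemma bounded_in_first_cover_preimage_iff:
  assumes B: "ballean X \<E>" and C: "cofinal_in (bounded_sets X \<E>) C"
    and no_small_unbounded: "\<nexists>A. no_upper_bound (bounded_sets X \<E>) A \<and> |A| <o |C|"
    and S: "S \<subseteq> first_cover C ` X"
  shows "bounded_in X \<E> {x \<in> X. first_cover C x \<in> S} \<longleftrightarrow> Above |C| S \<noteq> {}"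
proof
  have X: "X \<subseteq> \<Union>C"
    by (rule cofinal_in_bounded_sets_covers[OF B C])
  assume "bounded_in X \<E> {x \<in> X. first_cover C x \<in> S}"
  then obtain c where c: "c \<in> C" "{x \<in> X. first_cover C x \<in> S} \<subseteq> c"
    using C unfolding cofinal_in_def bounded_sets_def by blast
  have "(s, c) \<in> |C|" if "s \<in> S" for s
  proof -
    obtain x where x: "x \<in> X" "s = first_cover C x"
      using S \<open>s \<in> S\<close> by blast
    with c(2) \<open>s \<in> S\<close> have "x \<in> c" by blast
    with x X show ?thesis
      using first_cover_least[OF _ c(1)] by blast
  qed
  with c(1) have "c \<in> Above |C| S"
    unfolding Above_def Field_card_of by blast
  then show "Above |C| S \<noteq> {}" by blast
next
  assume "Above |C| S \<noteq> {}"
  then obtain c where c: "c \<in> C" "\<forall>s\<in>S. (s, c) \<in> |C|"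
    unfolding Above_def Field_card_of by blast
  have "x \<in> \<Union>(under |C| c)" if "x \<in> X" "first_cover C x \<in> S" for x
  proof -
    have "first_cover C x \<in> under |C| c"
      using c(2) that(2) by (simp add: under_def)
    moreover have "x \<in> first_cover C x"
      using cofinal_in_bounded_sets_covers[OF B C] that(1) by (intro mem_first_cover) blast
    ultimately show ?thesis by blast
  qed
  then have "{x \<in> X. first_cover C x \<in> S} \<subseteq> \<Union>(under |C| c)"
    by blast
  moreover have "C \<subseteq> bounded_sets X \<E>"
    using C unfolding cofinal_in_def by blast
  then have "bounded_in X \<E> (\<Union>(under |C| c))"
    using no_small_unbounded c(1) by (rule bounded_in_Union_under[OF B])
  ultimately show "bounded_in X \<E> {x \<in> X. first_cover C x \<in> S}"
    by (rule bounded_in_subset[rotated])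
qed

lemma ultradiscrete_small_unbounded_subfamily:
  assumes B: "ballean X \<E>" and U: "ultradiscrete X \<E>"
    and C: "cofinal_in (bounded_sets X \<E>) C"
  shows "\<exists>A. no_upper_bound (bounded_sets X \<E>) A \<and> |A| <o |C|"
proof (rule ccontr)
  assume no_small_unbounded: "\<nexists>A. no_upper_bound (bounded_sets X \<E>) A \<and> |A| <o |C|"
  define J where "J = first_cover C ` X"
  note preimage_iff = bounded_in_first_cover_preimage_iff[OF B C no_small_unbounded, folded J_def]
  have "\<not> bounded_in X \<E> X"
    using U unfolding ultradiscrete_def discrete_ballean_def by blast
  moreover have "{x \<in> X. first_cover C x \<in> J} = X"
    unfolding J_def by blast
  ultimately have J_unbounded: "Above |C| J = {}"
    using preimage_iff[of J] by simp
  have J_Field: "J \<subseteq> Field |C|"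
    using cofinal_in_bounded_sets_covers[OF B C] unfolding J_def Field_card_of
    by (auto intro: first_cover_in)
  have "wo_rel |C|"
    by (simp add: wo_rel_def card_of_Well_order)
  from wo_rel.unbounded_split[OF this J_Field J_unbounded]
  obtain S where S: "S \<subseteq> J" "Above |C| S = {}" "Above |C| (J - S) = {}"
    by blast
  have "\<not> bounded_in X \<E> {x \<in> X. first_cover C x \<in> S}"
    using preimage_iff[OF S(1)] S(2) by simp
  moreover have "\<not> bounded_in X \<E> {x \<in> X. first_cover C x \<in> J - S}"
    using preimage_iff[of "J - S"] S(3) by simp
  moreover have "bounded_in X \<E> {x \<in> X. first_cover C x \<in> S} \<or>
      bounded_in X \<E> {x \<in> X. first_cover C x \<in> J - S}"
    by (rule ultradiscrete_disjoint_bounded[OF B U]) blast+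
  ultimately show False by blast
qed

theorem proposition6p2:
  fixes X :: "'a set" and \<E> :: "('a \<times> 'a) set set"
  assumes "ballean X \<E>" and "ultradiscrete X \<E>"
  shows "add_lt_cof (bounded_sets X \<E>)"
proof -
  obtain C where C: "cofinal_in (bounded_sets X \<E>) C"
    and C_minimal: "\<And>C'. cofinal_in (bounded_sets X \<E>) C' \<Longrightarrow> |C| \<le>o |C'|"
    using ex_cofinal_in_card_minimal by blast
  obtain A where A: "no_upper_bound (bounded_sets X \<E>) A" "|A| <o |C|"
    using ultradiscrete_small_unbounded_subfamily[OF assms C] by blast
  have "|A| <o |C'|" if "cofinal_in (bounded_sets X \<E>) C'" for C'
    using A(2) C_minimal[OF that] by (rule ordLess_ordLeq_trans)
  with A(1) show ?thesis
    unfolding add_lt_cof_def by blast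
qed

end
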